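(* For any time warp $f$, any $n\in\omega\setminus\{0\}$ and any $m\in\omega$: (i) $f^\star(n)=m$ iff $f(m)<n\le f(m+1)$; (ii) $f^\star(\omega)=m$ iff $f(m)<\omega=f(m+1)$; (iii) $f^\star(n)=\omega$ iff $f(\omega)<n$; (iv) $f^\star(\omega)=\omega$ iff $f(\omega)<\omega$ or $\mathrm{last}(f)=\omega$.
   Context: Let $\omega^+=\omega\cup\{\omega\}$. A time warp is a join-preserving map $f\colon\omega^+\to\omega^+$ (equivalently order-preserving with $f(0)=0$, $f(\omega)=\bigvee_{n\in\omega}f(n)$), with time warps ordered pointwise. $p(m)=\bigvee\{k\in\omega\mid k<m\}$ is the predecessor time warp, and $f^\star$ is the largest time warp $h$ with $f\circ h\le p$. For a time warp $f$, $\mathrm{last}(f)=\min\{m\in\omega^+\mid f(m)=f(\omega)\}$. *)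

theory Defs
  imports "HOL-Library.Extended_Nat"
begin

text \<open>omega^+ is modelled by enat; omega is \<infinity>.\<close>

definition time_warp :: "(enat \<Rightarrow> enat) \<Rightarrow> bool" where
  "time_warp f \<longleftrightarrow> (\<forall>A. f (Sup A) = Sup (f ` A))"

definition pred_tw :: "enat \<Rightarrow> enat" where
  "pred_tw m = Sup {enat k | k. enat k < m}"

definition star :: "(enat \<Rightarrow> enat) \<Rightarrow> (enat \<Rightarrow> enat)" where
  "star f = (GREATEST h. time_warp h \<and> f \<circ> h \<le> pred_tw)"

definition last_tw :: "(enat \<Rightarrow> enat) \<Rightarrow> enat" where
  "last_tw f = (LEAST m. f m = f \<infinity>)"

end

theory Submission
  imports Defs
begin

text \<open>The time warps \<open>h\<close> with \<open>f \<circ> h \<le> pred_tw\<close> are closed under pointwise suprema, because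
  time warps preserve all joins; hence \<open>star f\<close> is their pointwise supremum. Testing it against the
  threshold time warps \<open>x \<mapsto> if n \<le> x then y else 0\<close> gives the Galois-type characterisation
  \<open>y \<le> star f n \<longleftrightarrow> f y < n\<close> for finite \<open>n > 0\<close>, and continuity of \<open>star f\<close> at \<open>\<infinity>\<close> gives
  \<open>j \<le> star f \<infinity> \<longleftrightarrow> f j < \<infinity>\<close> for finite \<open>j\<close>.\<close>

lemma Sup_range_enat: "Sup (range enat) = \<infinity>"
proof -
  have "\<not> finite (range enat)" using finite_imageD[of enat UNIV] by (auto simp: inj_on_def)
  then show ?thesis by (simp add: Sup_enat_def)
qed

lemma enat_le_Sup_iff:
  assumes "n \<noteq> 0"
  shows "enat n \<le> Sup A \<longleftrightarrow> (\<exists>a\<in>A. enat n \<le> a)"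
proof -
  obtain i where n: "n = Suc i" using assms by (cases n) auto
  have "enat n \<le> x \<longleftrightarrow> enat i < x" for x by (cases x) (auto simp: n)
  then show ?thesis by (simp add: less_Sup_iff)
qed

lemma enat_eq_iff: "x = enat m \<longleftrightarrow> enat m \<le> x \<and> \<not> enat (Suc m) \<le> x"
  by (cases x) auto

lemma infinity_eq_iff: "x = \<infinity> \<longleftrightarrow> (\<forall>j. enat j \<le> x)"
  by (cases x) (auto, metis Suc_n_not_le_n)

lemma time_warp_mono: "time_warp f \<Longrightarrow> mono f"
  unfolding time_warp_def mono_def by (metis Sup_insert ccpo_Sup_singleton image_insert image_empty
      sup.absorb_iff2 sup.cobounded1)

lemma time_warp_zero: "time_warp f \<Longrightarrow> f 0 = 0"
  unfolding time_warp_def by (metis Sup_empty bot_enat_def image_empty)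

lemma time_warp_infinity: "time_warp f \<Longrightarrow> f \<infinity> = (SUP k. f (enat k))"
  unfolding time_warp_def by (metis Sup_range_enat image_image)

lemma time_warp_Sup:
  assumes "\<And>h. h \<in> H \<Longrightarrow> time_warp h"
  shows "time_warp (Sup H)"
  unfolding time_warp_def
proof
  fix A :: "enat set"
  have "Sup H (Sup A) = (SUP h\<in>H. SUP a\<in>A. h a)"
    using assms by (simp add: time_warp_def)
  also have "\<dots> = (SUP a\<in>A. SUP h\<in>H. h a)" by (rule SUP_commute)
  finally show "Sup H (Sup A) = Sup (Sup H ` A)" by (simp add: image_image)
qed

lemma time_warp_comp_Sup: "time_warp f \<Longrightarrow> f \<circ> Sup H = (SUP h\<in>H. f \<circ> h)"
  unfolding time_warp_def by (auto simp: image_image)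

lemma time_warp_threshold:
  assumes "n \<noteq> 0"
  shows "time_warp (\<lambda>x. if enat n \<le> x then y else 0)"
  unfolding time_warp_def
proof
  fix A :: "enat set"
  show "(if enat n \<le> Sup A then y else 0) = Sup ((\<lambda>x. if enat n \<le> x then y else 0) ` A)"
  proof (cases "enat n \<le> Sup A")
    case True
    then obtain a where "a \<in> A" "enat n \<le> a" using enat_le_Sup_iff[OF assms] by blast
    then have "y \<le> Sup ((\<lambda>x. if enat n \<le> x then y else 0) ` A)"
      by (intro SUP_upper2[of a]) auto
    moreover have "Sup ((\<lambda>x. if enat n \<le> x then y else 0) ` A) \<le> y"
      by (rule SUP_least) simp
    ultimately show ?thesis using True by simp
  next
    case False
    then have "\<not> enat n \<le> a" if "a \<in> A" for a using that Sup_upper order_trans by blast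
    then show ?thesis using False by (simp add: bot_enat_def[symmetric])
  qed
qed

lemma pred_tw_le: "pred_tw x \<le> x"
  unfolding pred_tw_def by (auto intro: Sup_least)

lemma le_pred_twI: "enat k < x \<Longrightarrow> enat k \<le> pred_tw x"
  unfolding pred_tw_def by (auto intro: Sup_upper)

lemma pred_tw_enat_Suc: "pred_tw (enat (Suc k)) = enat k"
proof (rule antisym)
  show "pred_tw (enat (Suc k)) \<le> enat k" unfolding pred_tw_def by (auto intro: Sup_least)
qed (simp add: le_pred_twI)

lemma star_eq_Sup:
  assumes "time_warp f"
  shows "star f = Sup {h. time_warp h \<and> f \<circ> h \<le> pred_tw}"
  unfolding star_def
proof (rule Greatest_equality)
  let ?H = "{h. time_warp h \<and> f \<circ> h \<le> pred_tw}"
  have "f \<circ> Sup ?H \<le> pred_tw"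
    unfolding time_warp_comp_Sup[OF assms] by (auto intro: SUP_least)
  then show "time_warp (Sup ?H) \<and> f \<circ> Sup ?H \<le> pred_tw"
    by (auto intro: time_warp_Sup)
qed (auto intro: Sup_upper)

lemma time_warp_star: "time_warp f \<Longrightarrow> time_warp (star f)"
  by (auto simp: star_eq_Sup intro: time_warp_Sup)

lemma comp_star_le_pred_tw: "time_warp f \<Longrightarrow> f \<circ> star f \<le> pred_tw"
  by (auto simp: star_eq_Sup time_warp_comp_Sup intro: SUP_least)

lemma le_starI: "time_warp f \<Longrightarrow> time_warp h \<Longrightarrow> f \<circ> h \<le> pred_tw \<Longrightarrow> h \<le> star f"
  by (auto simp: star_eq_Sup intro: Sup_upper)

lemma le_star_enat_iff:
  assumes f: "time_warp f" and "n \<noteq> 0"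
  shows "y \<le> star f (enat n) \<longleftrightarrow> f y < enat n"
proof
  obtain i where n: "n = Suc i" using \<open>n \<noteq> 0\<close> by (cases n) auto
  assume "y \<le> star f (enat n)"
  then have "f y \<le> f (star f (enat n))" by (rule monoD[OF time_warp_mono[OF f]])
  also have "\<dots> \<le> pred_tw (enat n)" using comp_star_le_pred_tw[OF f] by (simp add: le_fun_def)
  also have "\<dots> < enat n" by (simp add: n pred_tw_enat_Suc)
  finally show "f y < enat n" .
next
  assume fy: "f y < enat n"
  define h where "h x = (if enat n \<le> x then y else 0)" for x
  have "f (h x) \<le> pred_tw x" for x
  proof (cases "enat n \<le> x")
    case True
    obtain k where "f y = enat k" using fy by (cases "f y") auto
    have "f y < x" using fy True by (rule order.strict_trans2)
    then show ?thesis using \<open>f y = enat k\<close> by (simp add: h_def True le_pred_twI)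
  qed (simp add: h_def time_warp_zero[OF f])
  then have "f \<circ> h \<le> pred_tw" by (simp add: le_fun_def)
  moreover have "time_warp h" unfolding h_def by (rule time_warp_threshold[OF \<open>n \<noteq> 0\<close>])
  ultimately have "h (enat n) \<le> star f (enat n)" using le_starI[OF f] by (simp add: le_fun_def)
  then show "y \<le> star f (enat n)" by (simp add: h_def)
qed

lemma enat_le_star_infinity_iff:
  assumes f: "time_warp f"
  shows "enat j \<le> star f \<infinity> \<longleftrightarrow> f (enat j) < \<infinity>"
proof
  assume j: "enat j \<le> star f \<infinity>"
  show "f (enat j) < \<infinity>"
  proof (cases "j = 0")
    case True then show ?thesis using time_warp_zero[OF f] by (simp add: zero_enat_def)
  next
    case False
    then obtain k where "enat j \<le> star f (enat k)"
      using j enat_le_Sup_iff by (auto simp: time_warp_infinity[OF time_warp_star[OF f]])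
    then have "f (enat j) \<le> f (star f (enat k))" by (rule monoD[OF time_warp_mono[OF f]])
    also have "\<dots> \<le> pred_tw (enat k)" using comp_star_le_pred_tw[OF f] by (simp add: le_fun_def)
    also have "\<dots> < \<infinity>" using pred_tw_le[of "enat k"] by (rule order.strict_trans1) simp
    finally show ?thesis .
  qed
next
  assume "f (enat j) < \<infinity>"
  then obtain i where "f (enat j) < enat (Suc i)" by (cases "f (enat j)") auto
  then have "enat j \<le> star f (enat (Suc i))" by (simp add: le_star_enat_iff[OF f])
  also have "\<dots> \<le> star f \<infinity>" using time_warp_mono[OF time_warp_star[OF f]] by (simp add: monoD)
  finally show "enat j \<le> star f \<infinity>" .
qed

lemma last_tw_eq_infinity_iff: "last_tw f = \<infinity> \<longleftrightarrow> (\<forall>j. f (enat j) \<noteq> f \<infinity>)"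
proof
  assume "last_tw f = \<infinity>"
  then show "\<forall>j. f (enat j) \<noteq> f \<infinity>"
    unfolding last_tw_def by (metis Least_le enat_ord_simps(4) infinity_ileE)
next
  assume "\<forall>j. f (enat j) \<noteq> f \<infinity>"
  then show "last_tw f = \<infinity>"
    unfolding last_tw_def by (intro Least_equality) (auto elim: not_infinity_eq[THEN iffD1, THEN exE])
qed

lemma time_warp_finite_on_enat_iff:
  assumes "time_warp f"
  shows "(\<forall>j. f (enat j) < \<infinity>) \<longleftrightarrow> f \<infinity> < \<infinity> \<or> last_tw f = \<infinity>"
proof -
  have "f (enat j) \<le> f \<infinity>" for j using time_warp_mono[OF assms] by (simp add: monoD)
  then show ?thesis unfolding last_tw_eq_infinity_iff
    by (metis enat_ord_simps(4) order.strict_trans1 top.not_eq_extremum)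
qed

theorem proposition2p7:
  fixes f :: "enat \<Rightarrow> enat" and n m :: nat
  assumes "time_warp f" and "n \<noteq> 0"
  shows "(star f (enat n) = enat m \<longleftrightarrow> f (enat m) < enat n \<and> enat n \<le> f (enat (Suc m)))
     \<and> (star f \<infinity> = enat m \<longleftrightarrow> f (enat m) < \<infinity> \<and> f (enat (Suc m)) = \<infinity>)
     \<and> (star f (enat n) = \<infinity> \<longleftrightarrow> f \<infinity> < enat n)
     \<and> (star f \<infinity> = \<infinity> \<longleftrightarrow> f \<infinity> < \<infinity> \<or> last_tw f = \<infinity>)"
proof -
  note fin = le_star_enat_iff[OF assms] and inf = enat_le_star_infinity_iff[OF assms(1)]
  have "star f (enat n) = enat m \<longleftrightarrow> f (enat m) < enat n \<and> enat n \<le> f (enat (Suc m))"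
    unfolding enat_eq_iff[of "star f (enat n)"] fin by auto
  moreover have "star f \<infinity> = enat m \<longleftrightarrow> f (enat m) < \<infinity> \<and> f (enat (Suc m)) = \<infinity>"
    unfolding enat_eq_iff[of "star f \<infinity>"] inf by auto
  moreover have "star f (enat n) = \<infinity> \<longleftrightarrow> f \<infinity> < enat n"
    using fin[of \<infinity>] by (simp add: top.extremum_unique[symmetric] del: top.extremum_unique)
  moreover have "star f \<infinity> = \<infinity> \<longleftrightarrow> f \<infinity> < \<infinity> \<or> last_tw f = \<infinity>"
    unfolding infinity_eq_iff[of "star f \<infinity>"] inf time_warp_finite_on_enat_iff[OF assms(1)] ..
  ultimately show ?thesis by blast
qed

end
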